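(* Let $S=(X,\cdot)$ be a semigroup and $\Phi$ a tight twisting of $S$, and let $T_\Phi^0$ be the associated $0$-twisted semigroup. Then for all $a,b\in X$ and all $\xi\in\{\mathcal{R},\mathcal{L},\mathcal{D},\mathcal{J},\mathcal{H},\leq_{\mathcal{R}},\leq_{\mathcal{L}},\leq_{\mathcal{J}}\}$ we have $a\mathrel{\xi^{T_\Phi^0}}b \iff a\mathrel{\xi^{S}}b$.
   Context: Green's relations and the preorders $\leq_{\mathcal{R}},\leq_{\mathcal{L}},\leq_{\mathcal{J}}$ are the standard ones (defined using the semigroup with an identity adjoined); a superscript indicates the semigroup in which they are computed. $\mathbb{N}=\{0,1,2,\dots\}$. A twisting of a semigroup $S$ is a map $\Phi:S\times S\to\mathbb{N}$ with $\Phi(a,b)+\Phi(ab,c)=\Phi(a,bc)+\Phi(b,c)$ for all $a,b,c\in S$. It is tight if (1) for all $a,b\in S$ there is $a'\in S$ with $ab=a'b$ and $\Phi(a',b)=0$, and (2) for all $a,b\in S$ there is $b'\in S$ with $ab=ab'$ and $\Phi(a,b')=0$. For $S=(X,\cdot)$ with twisting $\Phi$, the $0$-twisted semigroup is $T_\Phi^0=(X\sqcup\{0\},* )$ where $a*b=ab$ if $a,b\neq0$ and $\Phi(a,b)=0$, and $a*b=0$ otherwise. *)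

theory Defs
  imports Main
begin

text \<open>Green's preorders are computed in S^1 (identity adjoined), i.e. reflexively.\<close>

definition leR :: "('b \<Rightarrow> 'b \<Rightarrow> 'b) \<Rightarrow> 'b \<Rightarrow> 'b \<Rightarrow> bool" where
  "leR m a b \<longleftrightarrow> a = b \<or> (\<exists>x. a = m b x)"

definition leL :: "('b \<Rightarrow> 'b \<Rightarrow> 'b) \<Rightarrow> 'b \<Rightarrow> 'b \<Rightarrow> bool" where
  "leL m a b \<longleftrightarrow> a = b \<or> (\<exists>x. a = m x b)"

definition leJ :: "('b \<Rightarrow> 'b \<Rightarrow> 'b) \<Rightarrow> 'b \<Rightarrow> 'b \<Rightarrow> bool" where
  "leJ m a b \<longleftrightarrow> a = b \<or> (\<exists>x. a = m x b) \<or> (\<exists>y. a = m b y) \<or> (\<exists>x y. a = m (m x b) y)"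

definition greenR :: "('b \<Rightarrow> 'b \<Rightarrow> 'b) \<Rightarrow> 'b \<Rightarrow> 'b \<Rightarrow> bool" where
  "greenR m a b \<longleftrightarrow> leR m a b \<and> leR m b a"

definition greenL :: "('b \<Rightarrow> 'b \<Rightarrow> 'b) \<Rightarrow> 'b \<Rightarrow> 'b \<Rightarrow> bool" where
  "greenL m a b \<longleftrightarrow> leL m a b \<and> leL m b a"

definition greenJ :: "('b \<Rightarrow> 'b \<Rightarrow> 'b) \<Rightarrow> 'b \<Rightarrow> 'b \<Rightarrow> bool" where
  "greenJ m a b \<longleftrightarrow> leJ m a b \<and> leJ m b a"

definition greenH :: "('b \<Rightarrow> 'b \<Rightarrow> 'b) \<Rightarrow> 'b \<Rightarrow> 'b \<Rightarrow> bool" where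
  "greenH m a b \<longleftrightarrow> greenR m a b \<and> greenL m a b"

definition greenD :: "('b \<Rightarrow> 'b \<Rightarrow> 'b) \<Rightarrow> 'b \<Rightarrow> 'b \<Rightarrow> bool" where
  "greenD m a b \<longleftrightarrow> (\<exists>c. greenR m a c \<and> greenL m c b)"

datatype green_kind = gR | gL | gD | gJ | gH | gleR | gleL | gleJ

fun green :: "green_kind \<Rightarrow> ('b \<Rightarrow> 'b \<Rightarrow> 'b) \<Rightarrow> 'b \<Rightarrow> 'b \<Rightarrow> bool" where
  "green gR m = greenR m"
| "green gL m = greenL m"
| "green gD m = greenD m"
| "green gJ m = greenJ m"
| "green gH m = greenH m"
| "green gleR m = leR m"
| "green gleL m = leL m"
| "green gleJ m = leJ m"

definition twisting :: "('a \<Rightarrow> 'a \<Rightarrow> 'a) \<Rightarrow> ('a \<Rightarrow> 'a \<Rightarrow> nat) \<Rightarrow> bool" where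
  "twisting m \<Phi> \<longleftrightarrow> (\<forall>a b c. \<Phi> a b + \<Phi> (m a b) c = \<Phi> a (m b c) + \<Phi> b c)"

definition tight :: "('a \<Rightarrow> 'a \<Rightarrow> 'a) \<Rightarrow> ('a \<Rightarrow> 'a \<Rightarrow> nat) \<Rightarrow> bool" where
  "tight m \<Phi> \<longleftrightarrow>
     (\<forall>a b. \<exists>a'. m a b = m a' b \<and> \<Phi> a' b = 0) \<and>
     (\<forall>a b. \<exists>b'. m a b = m a b' \<and> \<Phi> a b' = 0)"

text \<open>The 0-twisted semigroup on X \<union> {0}: None plays the role of 0.\<close>
fun tw0 :: "('a \<Rightarrow> 'a \<Rightarrow> 'a) \<Rightarrow> ('a \<Rightarrow> 'a \<Rightarrow> nat) \<Rightarrow> 'a option \<Rightarrow> 'a option \<Rightarrow> 'a option" where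
  "tw0 m \<Phi> (Some a) (Some b) = (if \<Phi> a b = 0 then Some (m a b) else None)"
| "tw0 m \<Phi> _ _ = None"

end

theory Submission
  imports Defs
begin

text \<open>A product in \<open>T\<^sup>0\<close> of nonzero elements is either the product in \<open>S\<close> or \<open>0\<close>,
  so every divisibility relation among nonzero elements of \<open>T\<^sup>0\<close> already holds in \<open>S\<close>,
  and no nonzero element lies below \<open>0\<close> (so \<open>\<D>\<close> cannot pass through \<open>0\<close>). Conversely,
  tightness lets us replace the cofactor of a one-sided product \<open>b y\<close> or \<open>x b\<close> by one with
  vanishing twist. For a two-sided product \<open>x b y\<close> we first make \<open>\<Phi>(b, y') = 0\<close> and then
  \<open>\<Phi>(x', b y') = 0\<close>; the cocycle identity \<open>\<Phi>(x', b) + \<Phi>(x' b, y') = \<Phi>(x', b y') + \<Phi>(b, y')\<close>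
  between natural numbers then forces both twists on the left to vanish, so
  \<open>x' * b * y' = x b y\<close> in \<open>T\<^sup>0\<close>.\<close>

lemma tw0_eq_Some_iff:
  "tw0 m \<Phi> u v = Some c \<longleftrightarrow> (\<exists>a b. u = Some a \<and> v = Some b \<and> \<Phi> a b = 0 \<and> c = m a b)"
  by (cases u; cases v) auto

lemma leJ_iff_leR_or_leL_or_two_sided:
  "leJ m a b \<longleftrightarrow> leR m a b \<or> leL m a b \<or> (\<exists>x y. a = m (m x b) y)"
  unfolding leJ_def leR_def leL_def by blast

lemma leR_tw0_SomeD: "leR (tw0 m \<Phi>) (Some a) (Some b) \<Longrightarrow> leR m a b"
  unfolding leR_def by (metis option.inject tw0_eq_Some_iff)

lemma leL_tw0_SomeD: "leL (tw0 m \<Phi>) (Some a) (Some b) \<Longrightarrow> leL m a b"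
  unfolding leL_def by (metis option.inject tw0_eq_Some_iff)

lemma leJ_tw0_SomeD: "leJ (tw0 m \<Phi>) (Some a) (Some b) \<Longrightarrow> leJ m a b"
  unfolding leJ_def by (metis option.inject tw0_eq_Some_iff)

lemma not_leR_tw0_None: "\<not> leR (tw0 m \<Phi>) (Some a) None"
  unfolding leR_def by (metis option.distinct(1) tw0_eq_Some_iff)

lemma tight_right_factor:
  assumes "tight m \<Phi>"
  obtains y' where "tw0 m \<Phi> (Some b) (Some y') = Some (m b y)"
proof -
  obtain y' where "m b y = m b y'" "\<Phi> b y' = 0"
    using assms unfolding tight_def by metis
  then show thesis by (intro that[of y']) simp
qed

lemma tight_left_factor:
  assumes "tight m \<Phi>"
  obtains x' where "tw0 m \<Phi> (Some x') (Some b) = Some (m x b)"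
proof -
  obtain x' where "m x b = m x' b" "\<Phi> x' b = 0"
    using assms unfolding tight_def by metis
  then show thesis by (intro that[of x']) simp
qed

lemma twisting_zero_split:
  assumes "twisting m \<Phi>" and "\<Phi> a (m b c) = 0" and "\<Phi> b c = 0"
  shows "\<Phi> a b = 0" and "\<Phi> (m a b) c = 0"
  using assms unfolding twisting_def by (metis add_is_0)+

lemma tight_two_sided_factors:
  assumes "semigroup m" and "twisting m \<Phi>" and "tight m \<Phi>"
  obtains x' y' where "tw0 m \<Phi> (tw0 m \<Phi> (Some x') (Some b)) (Some y') = Some (m (m x b) y)"
proof -
  obtain y' where y': "m b y = m b y'" "\<Phi> b y' = 0"
    using assms(3) unfolding tight_def by metis
  obtain x' where x': "m x (m b y') = m x' (m b y')" "\<Phi> x' (m b y') = 0"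
    using assms(3) unfolding tight_def by metis
  have "\<Phi> x' b = 0" and "\<Phi> (m x' b) y' = 0"
    using twisting_zero_split[OF assms(2) x'(2) y'(2)] by auto
  moreover have "m (m x b) y = m (m x' b) y'"
    using x'(1) y'(1) semigroup.assoc[OF assms(1)] by metis
  ultimately show thesis by (intro that[of x' y']) simp
qed

lemma leR_tw0_Some_iff:
  assumes "tight m \<Phi>"
  shows "leR (tw0 m \<Phi>) (Some a) (Some b) \<longleftrightarrow> leR m a b"
proof
  assume "leR m a b"
  then consider "a = b" | y where "a = m b y" unfolding leR_def by blast
  then show "leR (tw0 m \<Phi>) (Some a) (Some b)"
  proof cases
    case (2 y)
    obtain y' where "tw0 m \<Phi> (Some b) (Some y') = Some (m b y)"
      using tight_right_factor[OF assms] .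
    with 2 have "Some a = tw0 m \<Phi> (Some b) (Some y')" by simp
    then show ?thesis unfolding leR_def by blast
  qed (simp add: leR_def)
qed (rule leR_tw0_SomeD)

lemma leL_tw0_Some_iff:
  assumes "tight m \<Phi>"
  shows "leL (tw0 m \<Phi>) (Some a) (Some b) \<longleftrightarrow> leL m a b"
proof
  assume "leL m a b"
  then consider "a = b" | x where "a = m x b" unfolding leL_def by blast
  then show "leL (tw0 m \<Phi>) (Some a) (Some b)"
  proof cases
    case (2 x)
    obtain x' where "tw0 m \<Phi> (Some x') (Some b) = Some (m x b)"
      using tight_left_factor[OF assms] .
    with 2 have "Some a = tw0 m \<Phi> (Some x') (Some b)" by simp
    then show ?thesis unfolding leL_def by blast
  qed (simp add: leL_def)
qed (rule leL_tw0_SomeD)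

lemma leJ_tw0_Some_iff:
  assumes "semigroup m" and "twisting m \<Phi>" and "tight m \<Phi>"
  shows "leJ (tw0 m \<Phi>) (Some a) (Some b) \<longleftrightarrow> leJ m a b"
proof
  assume "leJ m a b"
  then consider "leR m a b" | "leL m a b" | x y where "a = m (m x b) y"
    unfolding leJ_iff_leR_or_leL_or_two_sided by blast
  then show "leJ (tw0 m \<Phi>) (Some a) (Some b)"
  proof cases
    case (3 x y)
    obtain x' y' where "tw0 m \<Phi> (tw0 m \<Phi> (Some x') (Some b)) (Some y') = Some (m (m x b) y)"
      using tight_two_sided_factors[OF assms] .
    with 3 have "Some a = tw0 m \<Phi> (tw0 m \<Phi> (Some x') (Some b)) (Some y')" by simp
    then show ?thesis unfolding leJ_def by blast
  qed (simp_all add: leJ_iff_leR_or_leL_or_two_sided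
        leR_tw0_Some_iff[OF assms(3)] leL_tw0_Some_iff[OF assms(3)])
qed (rule leJ_tw0_SomeD)

lemma greenD_tw0_Some_iff:
  assumes "tight m \<Phi>"
  shows "greenD (tw0 m \<Phi>) (Some a) (Some b) \<longleftrightarrow> greenD m a b"
proof
  assume "greenD (tw0 m \<Phi>) (Some a) (Some b)"
  then obtain c where c: "greenR (tw0 m \<Phi>) (Some a) c" "greenL (tw0 m \<Phi>) c (Some b)"
    unfolding greenD_def by blast
  moreover obtain c' where "c = Some c'"
    using c(1) not_leR_tw0_None[of m \<Phi> a] unfolding greenR_def by (cases c) blast+
  ultimately show "greenD m a b"
    using leR_tw0_Some_iff[OF assms] leL_tw0_Some_iff[OF assms]
    unfolding greenD_def greenR_def greenL_def by blast
next
  assume "greenD m a b"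
  then show "greenD (tw0 m \<Phi>) (Some a) (Some b)"
    using leR_tw0_Some_iff[OF assms] leL_tw0_Some_iff[OF assms]
    unfolding greenD_def greenR_def greenL_def by blast
qed

theorem mainTheorem2:
  fixes m :: "'a \<Rightarrow> 'a \<Rightarrow> 'a" and \<Phi> :: "'a \<Rightarrow> 'a \<Rightarrow> nat"
  assumes "semigroup m"
    and "twisting m \<Phi>"
    and "tight m \<Phi>"
  shows "\<forall>a b. \<forall>\<xi>. green \<xi> (tw0 m \<Phi>) (Some a) (Some b) \<longleftrightarrow> green \<xi> m a b"
proof (intro allI)
  fix a b \<xi>
  show "green \<xi> (tw0 m \<Phi>) (Some a) (Some b) \<longleftrightarrow> green \<xi> m a b"
    by (cases \<xi>)
      (simp_all add: leR_tw0_Some_iff[OF assms(3)] leL_tw0_Some_iff[OF assms(3)]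
        leJ_tw0_Some_iff[OF assms] greenD_tw0_Some_iff[OF assms(3)]
        greenR_def greenL_def greenJ_def greenH_def)
qed

end
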